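(* Let $(X,\mathcal L,d)$ be a reduced Birkhoff--Beatley system whose vertical extension is drop complete and has finite Carathéodory number $\kappa$, let $D\subseteq X$ be a nonempty convex set, and let $f,g\colon D\to\mathbb R$. Suppose that for all $n\in\mathbb N$ with $1\le n\le\kappa$, all $x_0,x_1,\dots,x_n\in D$, all $x\in\operatorname{conv}\{x_1,\dots,x_n\}$ and all $t\in[0,1]$, $$f(c(t))\le(1-t)g(x_0)+t f(x),$$ where $c\colon[0,1]\to D$ is the standard parametrization of $[x_0,x]$. Then there exists a segment convex function $\phi\colon D\to\mathbb R$ with $f\le\phi\le g$ on $D$.
   Context: A reduced Birkhoff--Beatley system is a triple $(X,\mathcal L,d)$ where $X$ is a set with at least two elements, $\mathcal L$ is a family of subsets of $X$ (lines), and $d\colon X^2\to\mathbb R$ is a function, such that: (i) any two distinct points lie in a unique line of $\mathcal L$; (ii) for each $\ell\in\mathcal L$ there is a bijection $c\colon\mathbb R\to\ell$ (a ruler) with $d(c(t),c(s))=|t-s|$. For $a,b,t\in X$, write $(atb)$ if $a,t,b$ are three distinct collinear points with $d(a,b)=d(a,t)+d(t,b)$. The segment $[a,b]$ is $\{a\}$ if $a=b$, and $\{t\mid (atb)\}\cup\{a,b\}$ otherwise. If $a\ne b$, $\ell$ is the line through them and $c$ a ruler for $\ell$ with $c(\alpha)=a$, $c(\beta)=b$, the standard parametrization of $[a,b]$ is $\tilde c\colon[0,1]\to[a,b]$, $\tilde c(t)=c((\beta-\alpha)t+\alpha)$; if $a=b$ it is the constant map $a$. A set $K$ is convex if $[a,b]\subseteq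 K$ for all $a,b\in K$; $\operatorname{conv}(H)$ is the intersection of all convex sets containing $H$. For a nonempty convex $D$, a function $\phi\colon D\to\mathbb R$ is segment convex if $\phi(c(t))\le(1-t)\phi(x_0)+t\phi(x_1)$ for all $x_0,x_1\in D$, $t\in[0,1]$, where $c$ is the standard parametrization of $[x_0,x_1]$. The system is drop complete if for every convex $K\subseteq X$ and every $x_0\in X$, $\operatorname{conv}(\{x_0\}\cup K)=\bigcup\{[x_0,x]\mid x\in K\}$. The Carathéodory number of a system is the least $\kappa$ such that for every subset $H$ and every $x\in\operatorname{conv}(H)$ there is $F\subseteq H$ with $\operatorname{card}(F)\le\kappa$ and $x\in\operatorname{conv}(F)$ ($+\infty$ if no such $\kappa$ exists). The vertical extension is $(X^*,\mathcal L^*,d^* )$ with $X^*=X\times\mathbb R$, $d^*((x_0,y_0),(x_1,y_1))=\sqrt{d(x_0,x_1)^2+(y_0-y_1)^2}$, and lines: for $(x_0,y_0)\ne(x_1,y_1)$ with $x_0\ne x_1$, taking a ruler $c$ of the line through $x_0,x_1$ with $c(s_0)=x_0,c(s_1)=x_1$ and $a=((s_0-s_1)^2+(y_0-y_1)^2)^{-1/2}$, the line $\{(c(at(s_1-s_0)+s_0),\,at(y_1-y_0)+y_0)\mid t\in\mathbb R\}$; for $x_0=x_1$, the line $\{x_0\}\times\mathbb R$. (It is itself a reduced Birkhoff--Beatley system.) *)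

theory Defs
  imports Complex_Main
begin

definition ruler :: "('a \<Rightarrow> 'a \<Rightarrow> real) \<Rightarrow> 'a set \<Rightarrow> (real \<Rightarrow> 'a) \<Rightarrow> bool" where
  "ruler d l c \<longleftrightarrow> bij_betw c UNIV l \<and> (\<forall>t s. d (c t) (c s) = \<bar>t - s\<bar>)"

definition rBB :: "'a set \<Rightarrow> 'a set set \<Rightarrow> ('a \<Rightarrow> 'a \<Rightarrow> real) \<Rightarrow> bool" where
  "rBB X L d \<longleftrightarrow>
     (\<exists>a\<in>X. \<exists>b\<in>X. a \<noteq> b)
   \<and> (\<forall>l\<in>L. l \<subseteq> X)
   \<and> (\<forall>a\<in>X. \<forall>b\<in>X. a \<noteq> b \<longrightarrow> (\<exists>!l. l \<in> L \<and> a \<in> l \<and> b \<in> l))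
   \<and> (\<forall>l\<in>L. \<exists>c. ruler d l c)"

definition between :: "'a set set \<Rightarrow> ('a \<Rightarrow> 'a \<Rightarrow> real) \<Rightarrow> 'a \<Rightarrow> 'a \<Rightarrow> 'a \<Rightarrow> bool" where
  "between L d a t b \<longleftrightarrow> a \<noteq> t \<and> t \<noteq> b \<and> a \<noteq> b
     \<and> (\<exists>l\<in>L. a \<in> l \<and> t \<in> l \<and> b \<in> l) \<and> d a b = d a t + d t b"

definition segment :: "'a set set \<Rightarrow> ('a \<Rightarrow> 'a \<Rightarrow> real) \<Rightarrow> 'a \<Rightarrow> 'a \<Rightarrow> 'a set" where
  "segment L d a b = (if a = b then {a} else {t. between L d a t b} \<union> {a, b})"

definition bb_convex :: "'a set \<Rightarrow> 'a set set \<Rightarrow> ('a \<Rightarrow> 'a \<Rightarrow> real) \<Rightarrow> 'a set \<Rightarrow> bool" where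
  "bb_convex X L d K \<longleftrightarrow> K \<subseteq> X \<and> (\<forall>a\<in>K. \<forall>b\<in>K. segment L d a b \<subseteq> K)"

definition bb_conv :: "'a set \<Rightarrow> 'a set set \<Rightarrow> ('a \<Rightarrow> 'a \<Rightarrow> real) \<Rightarrow> 'a set \<Rightarrow> 'a set" where
  "bb_conv X L d H = \<Inter> {K. bb_convex X L d K \<and> H \<subseteq> K}"

text \<open>c is the standard parametrization of [x0,x1] (only its values on [0,1] matter).\<close>
definition std_param :: "'a set set \<Rightarrow> ('a \<Rightarrow> 'a \<Rightarrow> real) \<Rightarrow> 'a \<Rightarrow> 'a \<Rightarrow> (real \<Rightarrow> 'a) \<Rightarrow> bool" where
  "std_param L d x0 x1 c \<longleftrightarrow>
     (x0 = x1 \<longrightarrow> (\<forall>t\<in>{0..1}. c t = x0))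
   \<and> (x0 \<noteq> x1 \<longrightarrow> (\<exists>l r \<alpha> \<beta>. l \<in> L \<and> x0 \<in> l \<and> x1 \<in> l \<and> ruler d l r
          \<and> r \<alpha> = x0 \<and> r \<beta> = x1 \<and> (\<forall>t\<in>{0..1}. c t = r ((\<beta> - \<alpha>) * t + \<alpha>))))"

definition segment_convex :: "'a set set \<Rightarrow> ('a \<Rightarrow> 'a \<Rightarrow> real) \<Rightarrow> 'a set \<Rightarrow> ('a \<Rightarrow> real) \<Rightarrow> bool" where
  "segment_convex L d D \<phi> \<longleftrightarrow>
     (\<forall>x0\<in>D. \<forall>x1\<in>D. \<forall>c. std_param L d x0 x1 c \<longrightarrow>
        (\<forall>t\<in>{0..1}. \<phi> (c t) \<le> (1 - t) * \<phi> x0 + t * \<phi> x1))"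

definition drop_complete :: "'a set \<Rightarrow> 'a set set \<Rightarrow> ('a \<Rightarrow> 'a \<Rightarrow> real) \<Rightarrow> bool" where
  "drop_complete X L d \<longleftrightarrow>
     (\<forall>K x0. bb_convex X L d K \<and> K \<noteq> {} \<and> x0 \<in> X \<longrightarrow>
        bb_conv X L d (insert x0 K) = (\<Union>x\<in>K. segment L d x0 x))"

definition cara_prop :: "'a set \<Rightarrow> 'a set set \<Rightarrow> ('a \<Rightarrow> 'a \<Rightarrow> real) \<Rightarrow> nat \<Rightarrow> bool" where
  "cara_prop X L d k \<longleftrightarrow>
     (\<forall>H. H \<subseteq> X \<longrightarrow> (\<forall>x\<in>bb_conv X L d H.
        \<exists>F. F \<subseteq> H \<and> finite F \<and> card F \<le> k \<and> x \<in> bb_conv X L d F))"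

definition caratheodory_number :: "'a set \<Rightarrow> 'a set set \<Rightarrow> ('a \<Rightarrow> 'a \<Rightarrow> real) \<Rightarrow> nat \<Rightarrow> bool" where
  "caratheodory_number X L d \<kappa> \<longleftrightarrow> cara_prop X L d \<kappa> \<and> (\<forall>k. cara_prop X L d k \<longrightarrow> \<kappa> \<le> k)"

definition vext_X :: "'a set \<Rightarrow> ('a \<times> real) set" where
  "vext_X X = X \<times> UNIV"

definition vext_d :: "('a \<Rightarrow> 'a \<Rightarrow> real) \<Rightarrow> ('a \<times> real) \<Rightarrow> ('a \<times> real) \<Rightarrow> real" where
  "vext_d d p q = sqrt ((d (fst p) (fst q))\<^sup>2 + (snd p - snd q)\<^sup>2)"

definition vext_L :: "'a set \<Rightarrow> 'a set set \<Rightarrow> ('a \<Rightarrow> 'a \<Rightarrow> real) \<Rightarrow> ('a \<times> real) set set" where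
  "vext_L X L d = {S. \<exists>x0\<in>X. \<exists>y0. \<exists>x1\<in>X. \<exists>y1. (x0, y0) \<noteq> (x1, y1) \<and>
     ((x0 \<noteq> x1 \<and> (\<exists>l c s0 s1. l \<in> L \<and> x0 \<in> l \<and> x1 \<in> l \<and> ruler d l c \<and> c s0 = x0 \<and> c s1 = x1 \<and>
         S = (\<lambda>t. (c ((1 / sqrt ((s0 - s1)\<^sup>2 + (y0 - y1)\<^sup>2)) * t * (s1 - s0) + s0),
                    (1 / sqrt ((s0 - s1)\<^sup>2 + (y0 - y1)\<^sup>2)) * t * (y1 - y0) + y0)) ` UNIV))
      \<or> (x0 = x1 \<and> S = {x0} \<times> UNIV))}"

end

theory Submission
  imports Defs
begin

text \<open>
  Let \<open>C\<close> be the convex hull, in the vertical extension, of the epigraph of \<open>g\<close> over \<open>D\<close>, and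
  let \<open>\<phi> x\<close> be the infimum of the fibre of \<open>C\<close> over \<open>x\<close>. Segments of the vertical extension
  are exactly the graphs of affine interpolations of heights over segments of \<open>X\<close>, so the
  convexity of \<open>C\<close> makes \<open>\<phi>\<close> segment convex, and \<open>\<phi> \<le> g\<close> because the graph of \<open>g\<close> lies in
  \<open>C\<close>. The hypothesis is what keeps \<open>C\<close> above the graph of \<open>f\<close>: by the Caratheodory
  property every point of \<open>C\<close> lies in the hull of at most \<open>\<kappa>\<close> points of the epigraph, and
  by drop completeness such a hull is built by adding one point \<open>(x\<^sub>0, y\<^sub>0)\<close> at a time,
  taking the union of the segments from it to the previous hull; over such a segment the
  hypothesis, applied to the projection of the previous hull, bounds \<open>f\<close> by the
  interpolated height.
\<close>

section \<open>Rulers and standard parametrisations\<close>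

lemma ruler_in: "ruler d l r \<Longrightarrow> r s \<in> l"
  unfolding ruler_def bij_betw_def by auto

lemma ruler_inj: "ruler d l r \<Longrightarrow> r s = r s' \<Longrightarrow> s = s'"
  unfolding ruler_def bij_betw_def inj_on_def by auto

lemma ruler_surj: "ruler d l r \<Longrightarrow> x \<in> l \<Longrightarrow> \<exists>s. r s = x"
  unfolding ruler_def bij_betw_def by auto

lemma ruler_dist: "ruler d l r \<Longrightarrow> d (r s) (r s') = \<bar>s - s'\<bar>"
  unfolding ruler_def by auto

lemma ruler_rangeI:
  assumes dist: "\<And>s s'. d (P s) (P s') = \<bar>s - s'\<bar>"
  shows "ruler d (range P) P"
proof -
  have "inj P"
  proof (rule injI)
    fix s s' assume "P s = P s'"
    then have "\<bar>s - s'\<bar> = \<bar>s - s\<bar>" using dist by metis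
    then show "s = s'" by simp
  qed
  then show ?thesis unfolding ruler_def bij_betw_def using dist by simp
qed

lemma ruler_between:
  assumes r: "ruler d l r" and l: "l \<in> L" and \<alpha>\<beta>: "\<alpha> \<noteq> \<beta>" and t: "0 < t" "t < 1"
  shows "between L d (r \<alpha>) (r ((1 - t) * \<alpha> + t * \<beta>)) (r \<beta>)"
proof -
  let ?s = "(1 - t) * \<alpha> + t * \<beta>"
  have "\<alpha> - ?s = t * (\<alpha> - \<beta>)" "?s - \<beta> = (1 - t) * (\<alpha> - \<beta>)"
    by (simp_all add: algebra_simps)
  then have dist: "\<bar>\<alpha> - ?s\<bar> = t * \<bar>\<alpha> - \<beta>\<bar>" "\<bar>?s - \<beta>\<bar> = (1 - t) * \<bar>\<alpha> - \<beta>\<bar>"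
    using t by (simp_all add: abs_mult)
  then have "?s \<noteq> \<alpha>" "?s \<noteq> \<beta>" using t \<alpha>\<beta> by auto
  then have "r ?s \<noteq> r \<alpha>" "r ?s \<noteq> r \<beta>" "r \<alpha> \<noteq> r \<beta>"
    using \<alpha>\<beta> ruler_inj[OF r] by metis+
  then show ?thesis
    unfolding between_def ruler_dist[OF r] dist
    using l ruler_in[OF r] by (auto simp: algebra_simps)
qed

lemma ruler_between_obtain:
  assumes r: "ruler d l r" and p: "p \<in> l" and \<alpha>\<beta>: "\<alpha> \<noteq> \<beta>"
    and split: "d (r \<alpha>) (r \<beta>) = d (r \<alpha>) p + d p (r \<beta>)"
  obtains t where "t \<in> {0..1}" "p = r ((1 - t) * \<alpha> + t * \<beta>)"
proof -
  obtain s where s: "r s = p" using ruler_surj[OF r p] ..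
  have abs_split: "\<bar>\<alpha> - \<beta>\<bar> = \<bar>\<alpha> - s\<bar> + \<bar>s - \<beta>\<bar>"
    using split unfolding s[symmetric] ruler_dist[OF r] .
  define t where "t = (s - \<alpha>) / (\<beta> - \<alpha>)"
  have "t * (\<beta> - \<alpha>) = s - \<alpha>" using \<alpha>\<beta> unfolding t_def by simp
  then have "s = (1 - t) * \<alpha> + t * \<beta>" by (simp add: algebra_simps)
  moreover have "t \<in> {0..1}"
  proof (cases "\<alpha> < \<beta>")
    case True
    then have "\<alpha> \<le> s" "s \<le> \<beta>" using abs_split by (auto simp: abs_if split: if_splits)
    then show ?thesis unfolding t_def using True by (auto simp: divide_simps)
  next
    case False
    then have "\<beta> < \<alpha>" using \<alpha>\<beta> by simp
    then have "\<beta> \<le> s" "s \<le> \<alpha>" using abs_split by (auto simp: abs_if split: if_splits)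
    then show ?thesis unfolding t_def using \<open>\<beta> < \<alpha>\<close> by (auto simp: divide_simps)
  qed
  ultimately show thesis using that s by blast
qed

lemma rBB_dist_self:
  assumes sys: "rBB X L d" and u: "u \<in> X"
  shows "d u u = 0"
proof -
  obtain v where v: "v \<in> X" "v \<noteq> u" using sys unfolding rBB_def by metis
  obtain l where l: "l \<in> L" "u \<in> l" using sys u v unfolding rBB_def by metis
  obtain r where r: "ruler d l r" using sys l unfolding rBB_def by blast
  obtain s where "r s = u" using ruler_surj[OF r l(2)] ..
  then show ?thesis using ruler_dist[OF r, of s s] by simp
qed

lemma std_param_ends:
  assumes "std_param L d x0 x1 c"
  shows "c 0 = x0" "c 1 = x1"
  using assms unfolding std_param_def by (cases "x0 = x1"; auto)+

lemma std_param_obtain_ruler: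
  assumes "std_param L d x0 x1 c" "x0 \<noteq> x1"
  obtains l r \<alpha> \<beta> where "l \<in> L" "ruler d l r" "r \<alpha> = x0" "r \<beta> = x1" "\<alpha> \<noteq> \<beta>"
    "\<And>t. t \<in> {0..1} \<Longrightarrow> c t = r ((1 - t) * \<alpha> + t * \<beta>)"
proof -
  obtain l r \<alpha> \<beta> where lr: "l \<in> L" "ruler d l r" "r \<alpha> = x0" "r \<beta> = x1"
    and c: "\<forall>t\<in>{0..1}. c t = r ((\<beta> - \<alpha>) * t + \<alpha>)"
    using assms unfolding std_param_def by blast
  have "\<alpha> \<noteq> \<beta>" using lr assms(2) by blast
  moreover have "(\<beta> - \<alpha>) * t + \<alpha> = (1 - t) * \<alpha> + t * \<beta>" for t by (simp add: algebra_simps)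
  ultimately show thesis using that[OF lr] c by simp
qed

lemma std_param_ruler:
  assumes "l \<in> L" "ruler d l r"
  shows "std_param L d (r \<alpha>) (r \<beta>) (\<lambda>t. r ((1 - t) * \<alpha> + t * \<beta>))"
proof (cases "r \<alpha> = r \<beta>")
  case True
  then have "\<alpha> = \<beta>" using ruler_inj[OF assms(2)] by blast
  then show ?thesis unfolding std_param_def by (simp add: algebra_simps)
next
  case False
  have "(1 - t) * \<alpha> + t * \<beta> = (\<beta> - \<alpha>) * t + \<alpha>" for t by (simp add: algebra_simps)
  then show ?thesis unfolding std_param_def using False assms ruler_in[OF assms(2)] by metis
qed

lemma std_param_exists:
  assumes sys: "rBB X L d" and x: "x0 \<in> X" "x1 \<in> X"
  obtains c where "std_param L d x0 x1 c"
proof (cases "x0 = x1")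
  case True
  then have "std_param L d x0 x1 (\<lambda>_. x0)" unfolding std_param_def by simp
  then show thesis using that by blast
next
  case False
  obtain l where l: "l \<in> L" "x0 \<in> l" "x1 \<in> l" using sys x False unfolding rBB_def by metis
  obtain r where r: "ruler d l r" using sys l unfolding rBB_def by blast
  obtain \<alpha> \<beta> where "r \<alpha> = x0" "r \<beta> = x1" using ruler_surj[OF r] l by metis
  then show thesis using that std_param_ruler[OF l(1) r, of \<alpha> \<beta>] by blast
qed

lemma std_param_in_segment:
  assumes c: "std_param L d x0 x1 c" and t: "t \<in> {0..1}"
  shows "c t \<in> segment L d x0 x1"
proof (cases "x0 = x1 \<or> t = 0 \<or> t = 1")
  case True
  then show ?thesis using c t std_param_ends[OF c] unfolding std_param_def segment_def by auto
next
  case False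
  then obtain l r \<alpha> \<beta> where "l \<in> L" "ruler d l r" "r \<alpha> = x0" "r \<beta> = x1" "\<alpha> \<noteq> \<beta>"
    and "c t = r ((1 - t) * \<alpha> + t * \<beta>)"
    using std_param_obtain_ruler[OF c] t by metis
  moreover have "0 < t" "t < 1" using t False by auto
  ultimately have "between L d x0 (c t) x1" using ruler_between by metis
  then show ?thesis using False unfolding segment_def by simp
qed

lemma segment_between:
  assumes "p \<in> segment L d a b" "p \<noteq> a" "p \<noteq> b"
  shows "between L d a p b"
  using assms unfolding segment_def by (auto split: if_splits)

section \<open>Lines and segments of the vertical extension\<close>

lemma vext_d_Pair [simp]: "vext_d d (x, y) (x', y') = sqrt ((d x x')\<^sup>2 + (y - y')\<^sup>2)"
  unfolding vext_d_def by simp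

definition vext_param :: "(real \<Rightarrow> 'a) \<Rightarrow> real \<Rightarrow> real \<Rightarrow> real \<Rightarrow> real \<Rightarrow> real \<Rightarrow> 'a \<times> real" where
  "vext_param r s0 s1 y0 y1 \<tau> =
     (r ((1 / sqrt ((s0 - s1)\<^sup>2 + (y0 - y1)\<^sup>2)) * \<tau> * (s1 - s0) + s0),
      (1 / sqrt ((s0 - s1)\<^sup>2 + (y0 - y1)\<^sup>2)) * \<tau> * (y1 - y0) + y0)"

lemma vext_param_dist:
  assumes r: "ruler d l r" and s: "s0 \<noteq> s1"
  shows "vext_d d (vext_param r s0 s1 y0 y1 \<tau>) (vext_param r s0 s1 y0 y1 \<tau>') = \<bar>\<tau> - \<tau>'\<bar>"
proof -
  let ?Q = "(s0 - s1)\<^sup>2 + (y0 - y1)\<^sup>2"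
  define a where "a = 1 / sqrt ?Q"
  have "a\<^sup>2 * ?Q = 1" unfolding a_def power_divide using s by simp
  moreover have "(a * \<tau> * (s1 - s0) + s0 - (a * \<tau>' * (s1 - s0) + s0))\<^sup>2
      + (a * \<tau> * (y1 - y0) + y0 - (a * \<tau>' * (y1 - y0) + y0))\<^sup>2 = a\<^sup>2 * ?Q * (\<tau> - \<tau>')\<^sup>2"
    by (simp add: power2_eq_square algebra_simps)
  ultimately show ?thesis
    unfolding vext_param_def a_def[symmetric] vext_d_Pair ruler_dist[OF r] power2_abs by simp
qed

lemma ruler_vertical_line:
  assumes sys: "rBB X L d" and x: "x \<in> X"
  shows "ruler (vext_d d) ({x} \<times> UNIV) (Pair x)"
proof -
  have "range (Pair x) = {x} \<times> (UNIV :: real set)" by auto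
  moreover have "vext_d d (x, s) (x, s') = \<bar>s - s'\<bar>" for s s'
    using rBB_dist_self[OF sys x] by simp
  ultimately show ?thesis using ruler_rangeI[of "vext_d d" "Pair x"] by simp
qed

lemma vertical_line_in_vext_L:
  assumes "x \<in> X"
  shows "{x} \<times> UNIV \<in> vext_L X L d"
  unfolding vext_L_def mem_Collect_eq
  by (rule bexI[of _ x], rule exI[of _ 0], rule bexI[of _ x], rule exI[of _ 1]) (use assms in auto)

lemma vext_param_line_in_vext_L:
  assumes "l \<in> L" "ruler d l r" "r s0 \<in> X" "r s1 \<in> X" "s0 \<noteq> s1"
  shows "range (vext_param r s0 s1 y0 y1) \<in> vext_L X L d"
proof -
  have "r s0 \<noteq> r s1" using assms ruler_inj by metis
  then show ?thesis
    unfolding vext_L_def vext_param_def[abs_def] mem_Collect_eq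
    using assms ruler_in[OF assms(2)] by blast
qed

lemma vext_L_cases:
  assumes "S \<in> vext_L X L d"
  obtains (vertical) x where "x \<in> X" "S = {x} \<times> UNIV"
    | (sloped) l r s0 s1 y0 y1 where "l \<in> L" "ruler d l r" "s0 \<noteq> s1"
        "S = range (vext_param r s0 s1 y0 y1)"
proof -
  obtain x0 y0 x1 y1 where x: "x0 \<in> X" "x1 \<in> X" and kinds:
    "(x0 \<noteq> x1 \<and> (\<exists>l r s0 s1. l \<in> L \<and> ruler d l r \<and> r s0 = x0 \<and> r s1 = x1
        \<and> S = range (vext_param r s0 s1 y0 y1))) \<or> (x0 = x1 \<and> S = {x0} \<times> UNIV)"
    using assms unfolding vext_L_def vext_param_def[abs_def] mem_Collect_eq by blast
  from kinds show thesis
  proof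
    assume "x0 \<noteq> x1 \<and> (\<exists>l r s0 s1. l \<in> L \<and> ruler d l r \<and> r s0 = x0 \<and> r s1 = x1
        \<and> S = range (vext_param r s0 s1 y0 y1))"
    then obtain l r s0 s1 where "x0 \<noteq> x1" "l \<in> L" "ruler d l r" "r s0 = x0" "r s1 = x1"
      "S = range (vext_param r s0 s1 y0 y1)" by blast
    moreover from this have "s0 \<noteq> s1" by blast
    ultimately show thesis using sloped by blast
  next
    assume "x0 = x1 \<and> S = {x0} \<times> UNIV"
    then show thesis using vertical x by blast
  qed
qed

lemma vext_line_ruler:
  assumes sys: "rBB X L d" and S: "S \<in> vext_L X L d"
  obtains P where "ruler (vext_d d) S P"
    "\<And>\<tau>0 \<tau>1. std_param L d (fst (P \<tau>0)) (fst (P \<tau>1)) (\<lambda>t. fst (P ((1 - t) * \<tau>0 + t * \<tau>1)))"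
    "\<And>\<tau>0 \<tau>1 t. snd (P ((1 - t) * \<tau>0 + t * \<tau>1)) = (1 - t) * snd (P \<tau>0) + t * snd (P \<tau>1)"
  using S
proof (cases rule: vext_L_cases)
  case (vertical x)
  have "std_param L d x x (\<lambda>_. x)" unfolding std_param_def by simp
  then show thesis using that[of "Pair x"] ruler_vertical_line[OF sys vertical(1)] vertical(2) by simp
next
  case (sloped l r s0 s1 y0 y1)
  let ?P = "vext_param r s0 s1 y0 y1"
  define a where "a = 1 / sqrt ((s0 - s1)\<^sup>2 + (y0 - y1)\<^sup>2)"
  have P: "?P \<tau> = (r (a * \<tau> * (s1 - s0) + s0), a * \<tau> * (y1 - y0) + y0)" for \<tau>
    unfolding vext_param_def a_def ..
  have "a * ((1 - t) * \<tau>0 + t * \<tau>1) * (s1 - s0) + s0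
      = (1 - t) * (a * \<tau>0 * (s1 - s0) + s0) + t * (a * \<tau>1 * (s1 - s0) + s0)" for t \<tau>0 \<tau>1
    by (simp add: algebra_simps)
  then have "std_param L d (fst (?P \<tau>0)) (fst (?P \<tau>1)) (\<lambda>t. fst (?P ((1 - t) * \<tau>0 + t * \<tau>1)))"
    for \<tau>0 \<tau>1
    unfolding P fst_conv using std_param_ruler[OF sloped(1,2)] by presburger
  moreover have "snd (?P ((1 - t) * \<tau>0 + t * \<tau>1)) = (1 - t) * snd (?P \<tau>0) + t * snd (?P \<tau>1)"
    for \<tau>0 \<tau>1 t
    unfolding P snd_conv by (simp add: algebra_simps)
  moreover have "ruler (vext_d d) S ?P"
    using ruler_rangeI vext_param_dist[OF sloped(2,3)] sloped(4) by metis
  ultimately show thesis using that by blast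
qed

lemma vext_line_through:
  assumes sys: "rBB X L d" and x: "x0 \<in> X" "x1 \<in> X"
    and c: "std_param L d x0 x1 c" and ne: "(x0, y0) \<noteq> (x1, y1)"
  obtains S P \<tau>0 \<tau>1 where "S \<in> vext_L X L d" "ruler (vext_d d) S P" "\<tau>0 \<noteq> \<tau>1"
    "P \<tau>0 = (x0, y0)" "P \<tau>1 = (x1, y1)"
    "\<And>t. t \<in> {0..1} \<Longrightarrow> P ((1 - t) * \<tau>0 + t * \<tau>1) = (c t, (1 - t) * y0 + t * y1)"
proof (cases "x0 = x1")
  case True
  then have "c t = x0" if "t \<in> {0..1}" for t using c that unfolding std_param_def by simp
  then show thesis
    using that[OF vertical_line_in_vext_L[OF x(1)] ruler_vertical_line[OF sys x(1)], of y0 y1]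
      True ne by simp
next
  case False
  obtain l r \<alpha> \<beta> where lr: "l \<in> L" "ruler d l r" "r \<alpha> = x0" "r \<beta> = x1" "\<alpha> \<noteq> \<beta>"
    and c_eq: "\<And>t. t \<in> {0..1} \<Longrightarrow> c t = r ((1 - t) * \<alpha> + t * \<beta>)"
    using std_param_obtain_ruler[OF c False] by blast
  define R where "R = sqrt ((\<alpha> - \<beta>)\<^sup>2 + (y0 - y1)\<^sup>2)"
  have "R > 0" unfolding R_def using lr(5) by (simp add: add_pos_nonneg)
  let ?P = "vext_param r \<alpha> \<beta> y0 y1"
  have P: "?P (t * R) = (r ((1 - t) * \<alpha> + t * \<beta>), (1 - t) * y0 + t * y1)" for t
    unfolding vext_param_def R_def[symmetric] using \<open>R > 0\<close> by (simp add: algebra_simps)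
  show thesis
  proof (rule that[of "range ?P" ?P 0 R])
    show "range ?P \<in> vext_L X L d"
      using vext_param_line_in_vext_L[OF lr(1,2)] lr x by blast
    show "ruler (vext_d d) (range ?P) ?P"
      using ruler_rangeI vext_param_dist[OF lr(2,5)] by metis
    show "?P 0 = (x0, y0)" "?P R = (x1, y1)" using P[of 0] P[of 1] lr by simp_all
    show "?P ((1 - t) * 0 + t * R) = (c t, (1 - t) * y0 + t * y1)" if "t \<in> {0..1}" for t
      using P c_eq[OF that] by simp
  qed (use \<open>R > 0\<close> in simp)
qed

lemma interpolation_in_vext_segment:
  assumes sys: "rBB X L d" and x: "x0 \<in> X" "x1 \<in> X"
    and c: "std_param L d x0 x1 c" and t: "t \<in> {0..1}"
  shows "(c t, (1 - t) * y0 + t * y1) \<in> segment (vext_L X L d) (vext_d d) (x0, y0) (x1, y1)"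
proof (cases "(x0, y0) = (x1, y1) \<or> t = 0 \<or> t = 1")
  case True
  moreover have "c t = x0" if "x0 = x1" using c t that unfolding std_param_def by simp
  ultimately have "(c t, (1 - t) * y0 + t * y1) \<in> {(x0, y0), (x1, y1)}"
    using std_param_ends[OF c] by (auto simp: algebra_simps)
  then show ?thesis unfolding segment_def by auto
next
  case False
  then have ne: "(x0, y0) \<noteq> (x1, y1)" and "0 < t" "t < 1" using t by auto
  obtain S P \<tau>0 \<tau>1 where S: "S \<in> vext_L X L d" and P: "ruler (vext_d d) S P" and "\<tau>0 \<noteq> \<tau>1"
    and "P \<tau>0 = (x0, y0)" "P \<tau>1 = (x1, y1)"
    and "\<And>t. t \<in> {0..1} \<Longrightarrow> P ((1 - t) * \<tau>0 + t * \<tau>1) = (c t, (1 - t) * y0 + t * y1)"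
    using vext_line_through[OF sys x c ne] by blast
  with t have "between (vext_L X L d) (vext_d d) (x0, y0) (c t, (1 - t) * y0 + t * y1) (x1, y1)"
    using ruler_between[OF P S \<open>\<tau>0 \<noteq> \<tau>1\<close> \<open>0 < t\<close> \<open>t < 1\<close>] by simp
  then show ?thesis using ne unfolding segment_def by auto
qed

lemma vext_segment_elim:
  assumes sys: "rBB X L d" and x: "x0 \<in> X" "x1 \<in> X"
    and p: "p \<in> segment (vext_L X L d) (vext_d d) (x0, y0) (x1, y1)"
  obtains c t where "std_param L d x0 x1 c" "t \<in> {0..1}" "p = (c t, (1 - t) * y0 + t * y1)"
proof (cases "p = (x0, y0) \<or> p = (x1, y1)")
  case True
  obtain c where c: "std_param L d x0 x1 c" using std_param_exists[OF sys x] .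
  from True show thesis
  proof
    assume "p = (x0, y0)"
    then show thesis using that[OF c, of 0] std_param_ends[OF c] by simp
  next
    assume "p = (x1, y1)"
    then show thesis using that[OF c, of 1] std_param_ends[OF c] by simp
  qed
next
  case False
  then have "between (vext_L X L d) (vext_d d) (x0, y0) p (x1, y1)"
    using p by (rule_tac segment_between) auto
  then obtain S where S: "S \<in> vext_L X L d" "(x0, y0) \<in> S" "p \<in> S" "(x1, y1) \<in> S"
    and split: "vext_d d (x0, y0) (x1, y1) = vext_d d (x0, y0) p + vext_d d p (x1, y1)"
    and "(x0, y0) \<noteq> (x1, y1)"
    unfolding between_def by blast
  obtain P where P: "ruler (vext_d d) S P"
    and fst_P: "\<And>\<tau>0 \<tau>1. std_param L d (fst (P \<tau>0)) (fst (P \<tau>1)) (\<lambda>t. fst (P ((1 - t) * \<tau>0 + t * \<tau>1)))"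
    and snd_P: "\<And>\<tau>0 \<tau>1 t. snd (P ((1 - t) * \<tau>0 + t * \<tau>1)) = (1 - t) * snd (P \<tau>0) + t * snd (P \<tau>1)"
    by (rule vext_line_ruler[OF sys S(1)]) (rule that)
  obtain \<tau>0 where \<tau>0: "P \<tau>0 = (x0, y0)" using ruler_surj[OF P S(2)] ..
  obtain \<tau>1 where \<tau>1: "P \<tau>1 = (x1, y1)" using ruler_surj[OF P S(4)] ..
  note \<tau> = \<tau>0 \<tau>1
  have "\<tau>0 \<noteq> \<tau>1" using \<open>(x0, y0) \<noteq> (x1, y1)\<close> \<tau> by metis
  moreover have "vext_d d (P \<tau>0) (P \<tau>1) = vext_d d (P \<tau>0) p + vext_d d p (P \<tau>1)"
    using split unfolding \<tau> .
  ultimately obtain t where t: "t \<in> {0..1}" "p = P ((1 - t) * \<tau>0 + t * \<tau>1)"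
    by (rule ruler_between_obtain[OF P S(3)]) (rule that)
  show thesis
  proof (rule that[OF _ t(1)])
    show "std_param L d x0 x1 (\<lambda>t. fst (P ((1 - t) * \<tau>0 + t * \<tau>1)))"
      using fst_P[of \<tau>0 \<tau>1] \<tau> by simp
    have "snd p = (1 - t) * y0 + t * y1" using snd_P[of t \<tau>0 \<tau>1] \<tau> t(2) by simp
    then show "p = (fst (P ((1 - t) * \<tau>0 + t * \<tau>1)), (1 - t) * y0 + t * y1)"
      using t(2) by (simp add: prod_eq_iff)
  qed
qed

section \<open>Convex hulls\<close>

lemma bb_conv_superset: "H \<subseteq> bb_conv X L d H"
  unfolding bb_conv_def by blast

lemma bb_conv_least: "bb_convex X L d K \<Longrightarrow> H \<subseteq> K \<Longrightarrow> bb_conv X L d H \<subseteq> K"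
  unfolding bb_conv_def by blast

lemma bb_conv_mono: "H \<subseteq> H' \<Longrightarrow> bb_conv X L d H \<subseteq> bb_conv X L d H'"
  unfolding bb_conv_def by blast

lemma bb_convex_bb_conv:
  assumes "bb_convex X L d X" "H \<subseteq> X"
  shows "bb_convex X L d (bb_conv X L d H)"
proof -
  have sub: "bb_conv X L d H \<subseteq> X" using bb_conv_least[OF assms] .
  show ?thesis unfolding bb_convex_def
  proof (intro conjI ballI sub)
    fix a b assume "a \<in> bb_conv X L d H" "b \<in> bb_conv X L d H"
    then have "a \<in> K" "b \<in> K" if "bb_convex X L d K" "H \<subseteq> K" for K
      using that unfolding bb_conv_def by blast+
    then show "segment L d a b \<subseteq> bb_conv X L d H"
      unfolding bb_conv_def bb_convex_def by blast
  qed
qed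

lemma bb_conv_empty: "bb_conv X L d {} = {}"
proof -
  have "bb_convex X L d {}" unfolding bb_convex_def by simp
  then show ?thesis using bb_conv_least[of X L d "{}" "{}"] by blast
qed

lemma bb_conv_singleton:
  assumes "p \<in> X"
  shows "bb_conv X L d {p} = {p}"
proof -
  have "bb_convex X L d {p}" unfolding bb_convex_def segment_def using assms by simp
  then show ?thesis using bb_conv_least[OF _ order_refl] bb_conv_superset[of "{p}" X L d] by blast
qed

lemma bb_conv_insert_bb_conv:
  assumes "bb_convex X L d X" "B \<subseteq> X" "a \<in> X"
  shows "bb_conv X L d (insert a (bb_conv X L d B)) = bb_conv X L d (insert a B)"
proof
  show "bb_conv X L d (insert a B) \<subseteq> bb_conv X L d (insert a (bb_conv X L d B))"
    by (rule bb_conv_mono) (use bb_conv_superset[of B X L d] in blast)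
  have "bb_convex X L d (bb_conv X L d (insert a B))"
    by (rule bb_convex_bb_conv[OF assms(1)]) (use assms in blast)
  moreover have "insert a (bb_conv X L d B) \<subseteq> bb_conv X L d (insert a B)"
    using bb_conv_superset[of "insert a B"] bb_conv_mono[of B "insert a B"] by blast
  ultimately show "bb_conv X L d (insert a (bb_conv X L d B)) \<subseteq> bb_conv X L d (insert a B)"
    by (rule bb_conv_least)
qed

lemma drop_complete_bb_conv_insert:
  assumes "drop_complete X L d" "bb_convex X L d X" "B \<subseteq> X" "B \<noteq> {}" "a \<in> X"
  shows "bb_conv X L d (insert a B) = (\<Union>x\<in>bb_conv X L d B. segment L d a x)"
proof -
  have "bb_convex X L d (bb_conv X L d B)" by (rule bb_convex_bb_conv[OF assms(2,3)])
  moreover have "bb_conv X L d B \<noteq> {}" using bb_conv_superset[of B X L d] assms(4) by blast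
  ultimately have "bb_conv X L d (insert a (bb_conv X L d B)) = (\<Union>x\<in>bb_conv X L d B. segment L d a x)"
    using assms(1,5) unfolding drop_complete_def by blast
  then show ?thesis unfolding bb_conv_insert_bb_conv[OF assms(2,3,5)] .
qed

lemma bb_convex_X:
  assumes "rBB X L d"
  shows "bb_convex X L d X"
proof -
  have "segment L d a b \<subseteq> X" if "a \<in> X" "b \<in> X" for a b
    using assms that unfolding segment_def between_def rBB_def by auto
  then show ?thesis unfolding bb_convex_def by blast
qed

lemma bb_convex_vext_cylinder:
  assumes sys: "rBB X L d" and K: "bb_convex X L d K"
  shows "bb_convex (vext_X X) (vext_L X L d) (vext_d d) (K \<times> UNIV)"
  unfolding bb_convex_def
proof (intro conjI ballI subsetI)
  show "p \<in> vext_X X" if "p \<in> K \<times> UNIV" for p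
    using that K unfolding vext_X_def bb_convex_def by auto
  fix a b q
  assume ab: "a \<in> K \<times> UNIV" "b \<in> K \<times> UNIV"
    and q: "q \<in> segment (vext_L X L d) (vext_d d) a b"
  obtain x0 y0 x1 y1 where a: "a = (x0, y0)" and b: "b = (x1, y1)" by fastforce
  have x: "x0 \<in> K" "x1 \<in> K" using ab a b by auto
  then have "x0 \<in> X" "x1 \<in> X" using K unfolding bb_convex_def by auto
  moreover have "q \<in> segment (vext_L X L d) (vext_d d) (x0, y0) (x1, y1)" using q a b by simp
  ultimately obtain c t where c: "std_param L d x0 x1 c" "t \<in> {0..1}" "q = (c t, (1 - t) * y0 + t * y1)"
    by (rule vext_segment_elim[OF sys]) (rule that)
  have "c t \<in> K" using std_param_in_segment[OF c(1,2)] x K unfolding bb_convex_def by blast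
  then show "q \<in> K \<times> UNIV" using c(3) by simp
qed

lemma bb_convex_vext_X:
  assumes "rBB X L d"
  shows "bb_convex (vext_X X) (vext_L X L d) (vext_d d) (vext_X X)"
  using bb_convex_vext_cylinder[OF assms bb_convex_X[OF assms]] unfolding vext_X_def .

lemma fst_bb_conv_vext:
  assumes sys: "rBB X L d" and p: "p \<in> bb_conv (vext_X X) (vext_L X L d) (vext_d d) H"
  shows "fst p \<in> bb_conv X L d (fst ` H)"
  unfolding bb_conv_def
proof (rule InterI)
  fix K assume "K \<in> {K. bb_convex X L d K \<and> fst ` H \<subseteq> K}"
  then have K: "bb_convex X L d K" "H \<subseteq> K \<times> UNIV" by force+
  then have "p \<in> K \<times> UNIV" using bb_conv_least[OF bb_convex_vext_cylinder[OF sys K(1)]] p by blast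
  then show "fst p \<in> K" by auto
qed

section \<open>The segment convex function between f and g\<close>

definition epigraph :: "'a set \<Rightarrow> ('a \<Rightarrow> real) \<Rightarrow> ('a \<times> real) set" where
  "epigraph D g = {(x, y). x \<in> D \<and> g x \<le> y}"

lemma vext_segment_above:
  assumes sys: "rBB X L d" and x: "x0 \<in> X" "x1 \<in> X"
    and interp: "\<And>c t. std_param L d x0 x1 c \<Longrightarrow> t \<in> {0..1} \<Longrightarrow> f (c t) \<le> (1 - t) * g x0 + t * f x1"
    and y: "g x0 \<le> y0" "f x1 \<le> y1"
    and p: "p \<in> segment (vext_L X L d) (vext_d d) (x0, y0) (x1, y1)"
  shows "f (fst p) \<le> snd p"
proof -
  obtain c t where c: "std_param L d x0 x1 c" and t: "t \<in> {0..1}"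
    and p_eq: "p = (c t, (1 - t) * y0 + t * y1)"
    by (rule vext_segment_elim[OF sys x p]) (rule that)
  have "f (c t) \<le> (1 - t) * g x0 + t * f x1" using interp[OF c t] .
  also have "\<dots> \<le> (1 - t) * y0 + t * y1"
    using t y by (intro add_mono mult_left_mono) auto
  finally show ?thesis using p_eq by simp
qed

lemma bb_conv_finite_epigraph_above:
  fixes \<kappa> :: nat
  assumes sys: "rBB X L d" and drop: "drop_complete (vext_X X) (vext_L X L d) (vext_d d)"
    and DX: "D \<subseteq> X"
    and hyp: "\<And>A x0 x c t. finite A \<Longrightarrow> A \<noteq> {} \<Longrightarrow> A \<subseteq> D \<Longrightarrow> card A \<le> \<kappa> \<Longrightarrow> x0 \<in> D \<Longrightarrow>
       x \<in> bb_conv X L d A \<Longrightarrow> std_param L d x0 x c \<Longrightarrow> t \<in> {0..1} \<Longrightarrow>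
       f (c t) \<le> (1 - t) * g x0 + t * f x"
    and F: "finite F" "F \<subseteq> epigraph D g" "card F \<le> \<kappa>"
  shows "\<forall>p\<in>bb_conv (vext_X X) (vext_L X L d) (vext_d d) F. f (fst p) \<le> snd p"
  using F
proof (induction F rule: finite_induct)
  case empty
  then show ?case by (simp add: bb_conv_empty)
next
  case (insert p0 F)
  let ?conv = "bb_conv (vext_X X) (vext_L X L d) (vext_d d)"
  obtain x0 y0 where p0: "p0 = (x0, y0)" by fastforce
  have x0: "x0 \<in> D" "g x0 \<le> y0" using insert.prems p0 unfolding epigraph_def by auto
  have epiX: "epigraph D g \<subseteq> vext_X X" using DX unfolding epigraph_def vext_X_def by auto
  have FX: "F \<subseteq> vext_X X" and p0X: "p0 \<in> vext_X X" using insert.prems epiX by auto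
  show ?case
  proof (cases "F = {}")
    case True
    have "f x0 \<le> g x0"
      using hyp[of "{x0}" x0 x0 "\<lambda>_. x0" 0] x0(1) bb_conv_superset[of "{x0}" X L d] insert.prems True
      unfolding std_param_def by simp
    then show ?thesis using True p0 x0(2) bb_conv_singleton[OF p0X] by simp
  next
    case False
    have IH: "\<forall>q\<in>?conv F. f (fst q) \<le> snd q" using insert by simp
    have conv_insert: "?conv (insert p0 F) = (\<Union>q\<in>?conv F. segment (vext_L X L d) (vext_d d) p0 q)"
      using drop_complete_bb_conv_insert[OF drop bb_convex_vext_X[OF sys] FX False p0X] .
    show ?thesis
    proof
      fix p assume "p \<in> ?conv (insert p0 F)"
      then obtain q where "q \<in> ?conv F" and "p \<in> segment (vext_L X L d) (vext_d d) p0 q"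
        unfolding conv_insert by blast
      moreover obtain x1 y1 where "q = (x1, y1)" by fastforce
      ultimately have q: "(x1, y1) \<in> ?conv F"
        and p: "p \<in> segment (vext_L X L d) (vext_d d) (x0, y0) (x1, y1)" using p0 by auto
      have "?conv F \<subseteq> vext_X X"
        using bb_conv_least[OF bb_convex_vext_X[OF sys] FX] .
      then have x1: "x1 \<in> X" using q unfolding vext_X_def by auto
      have "x1 \<in> bb_conv X L d (fst ` F)" using fst_bb_conv_vext[OF sys q] by simp
      moreover have "fst ` F \<subseteq> D" using insert.prems unfolding epigraph_def by auto
      moreover have "card (fst ` F) \<le> \<kappa>"
        using card_image_le[OF insert.hyps(1), of fst] insert.hyps insert.prems by simp
      ultimately have interp: "f (c t) \<le> (1 - t) * g x0 + t * f x1"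
        if "std_param L d x0 x1 c" "t \<in> {0..1}" for c t
        using hyp[OF _ _ _ _ x0(1) _ that] insert.hyps(1) False by blast
      have x0X: "x0 \<in> X" using DX x0(1) by auto
      have y1: "f x1 \<le> y1" using IH q by force
      show "f (fst p) \<le> snd p"
        by (rule vext_segment_above[where f = f and g = g, OF sys x0X x1 _ x0(2) y1 p]) (rule interp)
    qed
  qed
qed

lemma bb_conv_epigraph_above:
  fixes \<kappa> :: nat
  assumes sys: "rBB X L d" and drop: "drop_complete (vext_X X) (vext_L X L d) (vext_d d)"
    and cara: "cara_prop (vext_X X) (vext_L X L d) (vext_d d) \<kappa>" and DX: "D \<subseteq> X"
    and hyp: "\<And>A x0 x c t. finite A \<Longrightarrow> A \<noteq> {} \<Longrightarrow> A \<subseteq> D \<Longrightarrow> card A \<le> \<kappa> \<Longrightarrow> x0 \<in> D \<Longrightarrow>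
       x \<in> bb_conv X L d A \<Longrightarrow> std_param L d x0 x c \<Longrightarrow> t \<in> {0..1} \<Longrightarrow>
       f (c t) \<le> (1 - t) * g x0 + t * f x"
    and p: "p \<in> bb_conv (vext_X X) (vext_L X L d) (vext_d d) (epigraph D g)"
  shows "f (fst p) \<le> snd p"
proof -
  have "epigraph D g \<subseteq> vext_X X" using DX unfolding epigraph_def vext_X_def by auto
  then have "\<exists>F. F \<subseteq> epigraph D g \<and> finite F \<and> card F \<le> \<kappa>
      \<and> p \<in> bb_conv (vext_X X) (vext_L X L d) (vext_d d) F"
    using cara p unfolding cara_prop_def by blast
  then obtain F where F: "finite F" "F \<subseteq> epigraph D g" "card F \<le> \<kappa>"
    and p_F: "p \<in> bb_conv (vext_X X) (vext_L X L d) (vext_d d) F"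
    by blast
  have "\<forall>p\<in>bb_conv (vext_X X) (vext_L X L d) (vext_d d) F. f (fst p) \<le> snd p"
    by (rule bb_conv_finite_epigraph_above[OF sys drop DX _ F]) (rule hyp)
  then show ?thesis using p_F by blast
qed

lemma segment_convex_fibre_Inf:
  assumes sys: "rBB X L d" and D: "bb_convex X L d D"
    and C: "bb_convex (vext_X X) (vext_L X L d) (vext_d d) C"
    and fibre_ne: "\<And>x. x \<in> D \<Longrightarrow> \<exists>y. (x, y) \<in> C"
    and fibre_bdd: "\<And>x. x \<in> D \<Longrightarrow> bdd_below {y. (x, y) \<in> C}"
  shows "segment_convex L d D (\<lambda>x. Inf {y. (x, y) \<in> C})"
  unfolding segment_convex_def
proof (intro ballI allI impI)
  let ?\<phi> = "\<lambda>x. Inf {y. (x, y) \<in> C}"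
  fix x0 x1 c and t :: real
  assume x: "x0 \<in> D" "x1 \<in> D" and c: "std_param L d x0 x1 c" and t: "t \<in> {0..1}"
  have xX: "x0 \<in> X" "x1 \<in> X" using x D unfolding bb_convex_def by auto
  have "c t \<in> D" using std_param_in_segment[OF c t] x D unfolding bb_convex_def by blast
  have below: "?\<phi> (c t) \<le> (1 - t) * y0 + t * y1" if "(x0, y0) \<in> C" "(x1, y1) \<in> C" for y0 y1
  proof -
    have "segment (vext_L X L d) (vext_d d) (x0, y0) (x1, y1) \<subseteq> C"
      using C that unfolding bb_convex_def by blast
    then have "(c t, (1 - t) * y0 + t * y1) \<in> C"
      using interpolation_in_vext_segment[OF sys xX c t] by blast
    then show ?thesis using fibre_bdd[OF \<open>c t \<in> D\<close>] by (intro cInf_lower) auto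
  qed
  show "?\<phi> (c t) \<le> (1 - t) * ?\<phi> x0 + t * ?\<phi> x1"
  proof (rule field_le_epsilon)
    fix e :: real assume e: "0 < e"
    obtain y0 where y0: "(x0, y0) \<in> C" "y0 < ?\<phi> x0 + e"
      using cInf_lessD[of "{y. (x0, y) \<in> C}" "?\<phi> x0 + e"] fibre_ne[OF x(1)] e by auto
    obtain y1 where y1: "(x1, y1) \<in> C" "y1 < ?\<phi> x1 + e"
      using cInf_lessD[of "{y. (x1, y) \<in> C}" "?\<phi> x1 + e"] fibre_ne[OF x(2)] e by auto
    have "?\<phi> (c t) \<le> (1 - t) * y0 + t * y1" using below y0(1) y1(1) .
    also have "\<dots> \<le> (1 - t) * (?\<phi> x0 + e) + t * (?\<phi> x1 + e)"
      using t y0 y1 by (intro add_mono mult_left_mono) auto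
    also have "\<dots> = (1 - t) * ?\<phi> x0 + t * ?\<phi> x1 + e" by (simp add: algebra_simps)
    finally show "?\<phi> (c t) \<le> (1 - t) * ?\<phi> x0 + t * ?\<phi> x1 + e" .
  qed
qed

theorem theorem2:
  fixes X :: "'a set" and L :: "'a set set" and d :: "'a \<Rightarrow> 'a \<Rightarrow> real"
    and \<kappa> :: nat and D :: "'a set" and f g :: "'a \<Rightarrow> real"
  assumes sys: "rBB X L d"
    and drop: "drop_complete (vext_X X) (vext_L X L d) (vext_d d)"
    and cara: "caratheodory_number (vext_X X) (vext_L X L d) (vext_d d) \<kappa>"
    and Dne: "D \<noteq> {}"
    and Dconv: "bb_convex X L d D"
    and hyp: "\<And>n x0 xs x c t. 1 \<le> n \<Longrightarrow> n \<le> \<kappa> \<Longrightarrow> x0 \<in> D \<Longrightarrow> (\<forall>i\<in>{1..n}. xs i \<in> D) \<Longrightarrow>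
       x \<in> bb_conv X L d (xs ` {1..n}) \<Longrightarrow> std_param L d x0 x c \<Longrightarrow> t \<in> {0..1} \<Longrightarrow>
       f (c t) \<le> (1 - t) * g x0 + t * f x"
  shows "\<exists>\<phi>. segment_convex L d D \<phi> \<and> (\<forall>x\<in>D. f x \<le> \<phi> x \<and> \<phi> x \<le> g x)"
proof -
  let ?conv = "bb_conv (vext_X X) (vext_L X L d) (vext_d d)"
  define C where "C = ?conv (epigraph D g)"
  have DX: "D \<subseteq> X" using Dconv unfolding bb_convex_def by blast
  have set_hyp: "f (c t) \<le> (1 - t) * g x0 + t * f x"
    if A: "finite A" "A \<noteq> {}" "A \<subseteq> D" "card A \<le> \<kappa>" "x0 \<in> D" "x \<in> bb_conv X L d A"
      "std_param L d x0 x c" "t \<in> {0..1}" for A x0 x c t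
  proof -
    obtain xs where "bij_betw xs {1..card A} A" using ex_bij_betw_nat_finite_1[OF A(1)] ..
    then have "xs ` {1..card A} = A" by (simp add: bij_betw_def)
    moreover have "1 \<le> card A" using A(1,2) by (simp add: Suc_le_eq card_gt_0_iff)
    ultimately show ?thesis by (intro hyp[OF _ A(4,5) _ _ A(7,8)]) (use A(3,6) in auto)
  qed
  have "cara_prop (vext_X X) (vext_L X L d) (vext_d d) \<kappa>"
    using cara unfolding caratheodory_number_def by blast
  then have above: "f (fst p) \<le> snd p" if "p \<in> C" for p
    by (rule bb_conv_epigraph_above[OF sys drop _ DX _ that[unfolded C_def]]) (rule set_hyp)
  have graph: "(x, g x) \<in> C" if "x \<in> D" for x
    using that bb_conv_superset[of "epigraph D g"] unfolding C_def epigraph_def by blast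
  have bdd: "bdd_below {y. (x, y) \<in> C}" for x
    by (rule bdd_belowI[of _ "f x"]) (use above in force)
  have "epigraph D g \<subseteq> vext_X X" using DX unfolding epigraph_def vext_X_def by auto
  then have "bb_convex (vext_X X) (vext_L X L d) (vext_d d) C"
    unfolding C_def by (rule bb_convex_bb_conv[OF bb_convex_vext_X[OF sys]])
  then have "segment_convex L d D (\<lambda>x. Inf {y. (x, y) \<in> C})"
    using segment_convex_fibre_Inf[OF sys Dconv _ _ bdd] graph by blast
  moreover have "f x \<le> Inf {y. (x, y) \<in> C}" "Inf {y. (x, y) \<in> C} \<le> g x" if "x \<in> D" for x
  proof -
    show "f x \<le> Inf {y. (x, y) \<in> C}" by (rule cInf_greatest) (use graph[OF that] above in force)+
    show "Inf {y. (x, y) \<in> C} \<le> g x" by (rule cInf_lower) (use graph[OF that] bdd in auto)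
  qed
  ultimately show ?thesis by blast
qed

end
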